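(* Let $X_1,X_2$ be sets, $H_1$ a group acting transitively on $X_1$, $H_2$ an abelian group (written additively) acting on $X_2$, and $H_2'$ a subgroup of $H_2$. Put $X_2'=\{y\in X_2 : \text{for } g\in H_2,\ g\cdot y=y \iff g\in H_2'\}$ and $X=X_1\times X_2'$. Let $\varGamma_1:H_1\times X\to X$, $\varGamma_1(g,(x_1,x_2))=(g\cdot x_1,x_2)$. Let $\varphi:H_2\times X_1\times X_2'\to X_1$ be a map with $\varphi(0,x_1,x_2)=x_1$ and $\varphi(g+h,x_1,x_2)=\varphi(h,\varphi(g,x_1,x_2),g\cdot x_2)$ for all $g,h\in H_2$, and define the action $\varGamma_2:H_2\times X\to X$, $\varGamma_2(g,(x_1,x_2))=(\varphi(g,x_1,x_2),g\cdot x_2)$. Let $G_1=\rho_{\varGamma_1}(H_1)$, $G_2=\rho_{\varGamma_2}(H_2)\subset\mathfrak S(X)$ and assume every element of $G_1$ commutes with every element of $G_2$. Let $x=(x_1^0,x_2^0)\in X$. Then there is a bijection between $G_1\cdot[x]_{G_2}\subset G_2\backslash X$ and the orbit set $H_2'\backslash X_1$ of the action of $H_2'$ on $X_1$ given by $g\cdot y=\varphi(g,y,x_2^0)$, and this bijection commutes with the action of $G_1$ (equivalently of $H_1$), where $H_1$ acts on $G_2\backslash X$ by $h\cdot[z]_{G_2}=[\varGamma_1(h,z)]_{G_2}$ and on $H_2'\backslash X_1$ by $h\cdot[y]=[h\cdot y]$.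
   Context: $\mathfrak S(X)$ is the group of bijections of $X$; for an action $\varGamma$ of a group $K$ on $X$, $\rho_\varGamma:K\to\mathfrak S(X)$ is its permutation representation, $\rho_\varGamma(k)(x)=\varGamma(k,x)$. For a group $K$ acting on $Y$, $K\backslash Y$ is the set of orbits and $[y]_K$ the orbit of $y$. Since $H_2'$ fixes $x_2^0$, the formula $g\cdot y=\varphi(g,y,x_2^0)$ ($g\in H_2'$) defines an action of $H_2'$ on $X_1$, and the $H_1$ action on $H_2'\backslash X_1$ is well defined because $G_1$ and $G_2$ commute. *)

theory Defs
  imports "HOL-Algebra.Group_Action"
begin

text \<open>Permutation representation of an action Gamma of K on X, as a set of
  (extensional) maps on X: the image rho_Gamma(K).\<close>
definition perm_rep :: "('k, 'm) monoid_scheme \<Rightarrow> ('k \<Rightarrow> 'x \<Rightarrow> 'x) \<Rightarrow> 'x set \<Rightarrow> ('x \<Rightarrow> 'x) set" where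
  "perm_rep K Gam X = (\<lambda>k. restrict (Gam k) X) ` carrier K"

definition perm_orbit :: "('x \<Rightarrow> 'x) set \<Rightarrow> 'x \<Rightarrow> 'x set" where
  "perm_orbit S z = {\<sigma> z | \<sigma>. \<sigma> \<in> S}"

definition perm_orbits :: "('x \<Rightarrow> 'x) set \<Rightarrow> 'x set \<Rightarrow> 'x set set" where
  "perm_orbits S X = perm_orbit S ` X"

definition orbit_act :: "('x \<Rightarrow> 'x set) \<Rightarrow> ('h \<Rightarrow> 'x \<Rightarrow> 'x) \<Rightarrow> 'h \<Rightarrow> 'x set \<Rightarrow> 'x set" where
  "orbit_act orb f h Q = orb (f h (SOME z. z \<in> Q))"

end

theory Submission
  imports Defs
begin

text \<open>
  Because H2 is abelian, the exact-stabilizer condition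
  defining X2' is H2-invariant, and the cocycle identity for \<phi> makes \<Gamma>2 a genuine action
  of H2 on X; likewise the stabilizer H2' of x20 acts on X1 through \<psi>.  Transitivity of H1
  shows that the G1-translates of the base orbit [(x10, x20)] are exactly the G2-orbits
  through the fibre X1 \<times> {x20}.  The bijection sends such an orbit Q to its fibre
  {y. (y, x20) \<in> Q}: the fibre of the G2-orbit of (y, x20) is the H2'-orbit of y, because
  g \<in> H2 fixes x20 iff g \<in> H2'.  It is injective since distinct orbits are disjoint, and it
  is H1-equivariant since H1 commutes with \<Gamma>2 and hence induces well-defined maps on orbits.
\<close>

lemma group_actionI:
  assumes "group G"
    and closed: "\<And>g x. g \<in> carrier G \<Longrightarrow> x \<in> E \<Longrightarrow> \<phi> g x \<in> E"
    and ext: "\<And>g. g \<in> carrier G \<Longrightarrow> \<phi> g \<in> extensional E"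
    and one: "\<And>x. x \<in> E \<Longrightarrow> \<phi> \<one>\<^bsub>G\<^esub> x = x"
    and mult: "\<And>g h x. g \<in> carrier G \<Longrightarrow> h \<in> carrier G \<Longrightarrow> x \<in> E \<Longrightarrow>
                 \<phi> (g \<otimes>\<^bsub>G\<^esub> h) x = \<phi> g (\<phi> h x)"
  shows "group_action G E \<phi>"
proof -
  interpret G: group G by (fact assms(1))
  have inverse: "\<phi> (inv\<^bsub>G\<^esub> g) (\<phi> g x) = x" if "g \<in> carrier G" "x \<in> E" for g x
    using mult[of "inv\<^bsub>G\<^esub> g" g x] one that by simp
  have bij: "\<phi> g \<in> Bij E" if g: "g \<in> carrier G" for g
  proof -
    have "bij_betw (\<phi> g) E E"
    proof (rule bij_betw_byWitness[where f' = "\<phi> (inv\<^bsub>G\<^esub> g)"])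
      show "\<forall>x\<in>E. \<phi> (inv\<^bsub>G\<^esub> g) (\<phi> g x) = x" using inverse g by blast
      show "\<forall>x\<in>E. \<phi> g (\<phi> (inv\<^bsub>G\<^esub> g) x) = x"
        using inverse[of "inv\<^bsub>G\<^esub> g"] g by simp
    qed (use closed g in auto)
    thus ?thesis using ext g unfolding Bij_def by blast
  qed
  have "\<phi> (g \<otimes>\<^bsub>G\<^esub> h) = \<phi> g \<otimes>\<^bsub>BijGroup E\<^esub> \<phi> h"
    if "g \<in> carrier G" "h \<in> carrier G" for g h
  proof -
    have "\<phi> (g \<otimes>\<^bsub>G\<^esub> h) = compose E (\<phi> g) (\<phi> h)"
      using ext[of "g \<otimes>\<^bsub>G\<^esub> h"] mult that
      by (intro extensionalityI[where A = E]) (auto simp: compose_def)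
    thus ?thesis using bij that by (simp add: BijGroup_def)
  qed
  hence "\<phi> \<in> hom G (BijGroup E)"
    using bij by (intro homI) (auto simp: BijGroup_def)
  thus ?thesis
    unfolding group_action_def group_hom_def group_hom_axioms_def
    using group_BijGroup assms(1) by blast
qed

lemma (in group_action) orbit_eq_of_mem:
  assumes "x \<in> E" and "y \<in> orbit G \<phi> x"
  shows "orbit G \<phi> y = orbit G \<phi> x"
proof -
  have "y \<in> E" using assms element_image by (auto simp: orbit_def)
  hence "orbit G \<phi> y \<in> orbits G E \<phi>" "orbit G \<phi> x \<in> orbits G E \<phi>"
    using assms(1) by (auto simp: orbits_def)
  moreover have "y \<in> orbit G \<phi> y \<inter> orbit G \<phi> x"
    using \<open>y \<in> E\<close> assms(2) orbit_refl by blast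
  ultimately show ?thesis using disjoint_union by blast
qed

lemma (in group_action) orbit_act_orbit:
  assumes "z \<in> E"
    and maps: "\<And>w. w \<in> E \<Longrightarrow> f h w \<in> E"
    and commutes: "\<And>g w. g \<in> carrier G \<Longrightarrow> w \<in> E \<Longrightarrow> f h (\<phi> g w) = \<phi> g (f h w)"
    and orb: "\<And>w. w \<in> E \<Longrightarrow> orb w = orbit G \<phi> w"
  shows "orbit_act orb f h (orbit G \<phi> z) = orbit G \<phi> (f h z)"
proof -
  have "(SOME w. w \<in> orbit G \<phi> z) \<in> orbit G \<phi> z"
    using orbit_refl[OF assms(1)] by (rule someI)
  then obtain g where g: "g \<in> carrier G" "(SOME w. w \<in> orbit G \<phi> z) = \<phi> g z"
    by (auto simp: orbit_def)
  have "f h (\<phi> g z) \<in> orbit G \<phi> (f h z)"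
    using commutes[OF g(1) assms(1)] g(1) by (auto simp: orbit_def)
  hence "orbit G \<phi> (f h (\<phi> g z)) = orbit G \<phi> (f h z)"
    using orbit_eq_of_mem maps assms(1) by blast
  thus ?thesis
    unfolding orbit_act_def g(2) using orb maps element_image g(1) assms(1) by metis
qed

lemma (in group_action) fixes_image_iff:
  assumes "comm_group G" and "g \<in> carrier G" "k \<in> carrier G" "y \<in> E"
  shows "\<phi> k (\<phi> g y) = \<phi> g y \<longleftrightarrow> \<phi> k y = y"
proof -
  interpret comm_group G by (fact assms(1))
  have "\<phi> k (\<phi> g y) = \<phi> g (\<phi> k y)"
    using composition_rule assms(2-4) m_comm by metis
  moreover have "\<phi> k y \<in> E" using element_image assms(3,4) by blast
  ultimately show ?thesis
    using inj_prop[OF assms(2)] assms(4) by (metis inj_on_eq_iff)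
qed

lemma perm_orbit_perm_rep:
  assumes "z \<in> X"
  shows "perm_orbit (perm_rep K Gam X) z = orbit K (\<lambda>k. restrict (Gam k) X) z"
  unfolding perm_orbit_def perm_rep_def orbit_def by blast

lemma perm_rep_commute:
  assumes "\<forall>\<sigma> \<in> perm_rep K1 A X. \<forall>\<tau> \<in> perm_rep K2 B X. \<forall>z \<in> X. \<sigma> (\<tau> z) = \<tau> (\<sigma> z)"
    and "k1 \<in> carrier K1" "k2 \<in> carrier K2" "z \<in> X" "A k1 z \<in> X" "B k2 z \<in> X"
  shows "A k1 (B k2 z) = B k2 (A k1 z)"
proof -
  have "restrict (A k1) X \<in> perm_rep K1 A X" "restrict (B k2) X \<in> perm_rep K2 B X"
    using assms(2,3) by (auto simp: perm_rep_def)
  thus ?thesis using assms(1,4-6) by fastforce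
qed

definition skew_act :: "('g \<Rightarrow> 'x \<Rightarrow> 'y \<Rightarrow> 'x) \<Rightarrow> ('g \<Rightarrow> 'y \<Rightarrow> 'y) \<Rightarrow> 'g \<Rightarrow> 'x \<times> 'y \<Rightarrow> 'x \<times> 'y" where
  "skew_act \<phi> act g = (\<lambda>(x, y). (\<phi> g x y, act g y))"

lemma skew_group_action:
  assumes "comm_group H" and "group_action H Z act" and "Y \<subseteq> Z"
    and act_closed: "\<And>g y. g \<in> carrier H \<Longrightarrow> y \<in> Y \<Longrightarrow> act g y \<in> Y"
    and \<phi>_closed: "\<And>g x y. g \<in> carrier H \<Longrightarrow> x \<in> X \<Longrightarrow> y \<in> Y \<Longrightarrow> \<phi> g x y \<in> X"
    and \<phi>_one: "\<And>x y. x \<in> X \<Longrightarrow> y \<in> Y \<Longrightarrow> \<phi> \<one>\<^bsub>H\<^esub> x y = x"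
    and \<phi>_mult: "\<And>g h x y. g \<in> carrier H \<Longrightarrow> h \<in> carrier H \<Longrightarrow> x \<in> X \<Longrightarrow> y \<in> Y \<Longrightarrow>
                   \<phi> (g \<otimes>\<^bsub>H\<^esub> h) x y = \<phi> h (\<phi> g x y) (act g y)"
  shows "group_action H (X \<times> Y) (\<lambda>g. restrict (skew_act \<phi> act g) (X \<times> Y))"
proof -
  interpret H: comm_group H by (fact assms(1))
  interpret A: group_action H Z act by (fact assms(2))
  have act_one: "act \<one>\<^bsub>H\<^esub> y = y" if "y \<in> Y" for y
    using A.id_eq_one assms(3) that by (metis restrict_apply' subsetD)
  show ?thesis
  proof (rule group_actionI)
    fix g h z
    assume g: "g \<in> carrier H" and h: "h \<in> carrier H" and z: "z \<in> X \<times> Y"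
    then obtain x y where xy: "z = (x, y)" "x \<in> X" "y \<in> Y" by blast
    have "act (g \<otimes>\<^bsub>H\<^esub> h) y = act g (act h y)"
      using A.composition_rule assms(3) xy(3) g h by blast
    moreover have "\<phi> (g \<otimes>\<^bsub>H\<^esub> h) x y = \<phi> g (\<phi> h x y) (act h y)"
      using \<phi>_mult[OF h g xy(2,3)] H.m_comm g h by simp
    ultimately show "restrict (skew_act \<phi> act (g \<otimes>\<^bsub>H\<^esub> h)) (X \<times> Y) z
        = restrict (skew_act \<phi> act g) (X \<times> Y) (restrict (skew_act \<phi> act h) (X \<times> Y) z)"
      using xy g h \<phi>_closed act_closed by (simp add: skew_act_def)
  qed (auto simp: skew_act_def \<phi>_closed act_closed \<phi>_one act_one)
qed

lemma stabilizer_fibre_group_action: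
  assumes "comm_group H" and "subgroup K H"
    and fixes_y: "\<And>g. g \<in> K \<Longrightarrow> act g y = y"
    and \<phi>_closed: "\<And>g x. g \<in> K \<Longrightarrow> x \<in> X \<Longrightarrow> \<phi> g x y \<in> X"
    and \<phi>_one: "\<And>x. x \<in> X \<Longrightarrow> \<phi> \<one>\<^bsub>H\<^esub> x y = x"
    and \<phi>_mult: "\<And>g h x. g \<in> K \<Longrightarrow> h \<in> K \<Longrightarrow> x \<in> X \<Longrightarrow>
                   \<phi> (g \<otimes>\<^bsub>H\<^esub> h) x y = \<phi> h (\<phi> g x y) (act g y)"
  shows "group_action (H\<lparr>carrier := K\<rparr>) X (\<lambda>g. \<lambda>x \<in> X. \<phi> g x y)"
proof (rule group_actionI)
  interpret H: comm_group H by (fact assms(1))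
  show "group (H\<lparr>carrier := K\<rparr>)" using H.subgroup_imp_group assms(2) .
  fix g h x assume "g \<in> carrier (H\<lparr>carrier := K\<rparr>)" "h \<in> carrier (H\<lparr>carrier := K\<rparr>)" "x \<in> X"
  hence g: "g \<in> K" and h: "h \<in> K" and x: "x \<in> X" by simp_all
  have "\<phi> (g \<otimes>\<^bsub>H\<^esub> h) x y = \<phi> g (\<phi> h x y) y"
    using \<phi>_mult[OF h g x] fixes_y[OF h] H.m_comm subgroup.mem_carrier[OF assms(2)] g h by metis
  thus "(\<lambda>x \<in> X. \<phi> (g \<otimes>\<^bsub>H\<lparr>carrier := K\<rparr>\<^esub> h) x y) x
        = (\<lambda>x \<in> X. \<phi> g x y) ((\<lambda>x \<in> X. \<phi> h x y) x)"
    using x h \<phi>_closed by simp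
qed (simp_all add: \<phi>_closed \<phi>_one)

lemma skew_orbit_fibre:
  assumes "x \<in> X" "y \<in> Y"
    and stab: "\<And>g. g \<in> carrier H \<Longrightarrow> act g y = y \<longleftrightarrow> g \<in> K" and "K \<subseteq> carrier H"
  shows "{x'. (x', y) \<in> orbit H (\<lambda>g. restrict (skew_act \<phi> act g) (X \<times> Y)) (x, y)}
         = orbit (H\<lparr>carrier := K\<rparr>) (\<lambda>g. \<lambda>x \<in> X. \<phi> g x y) x"
  using assms by (auto simp: orbit_def skew_act_def) (metis, metis subsetD)

definition fibre_at :: "'y \<Rightarrow> ('x \<times> 'y) set \<Rightarrow> 'x set" where
  "fibre_at y Q = {x. (x, y) \<in> Q}"

locale twisted_product =
  fixes H1 :: "('g1, 'm1) monoid_scheme" and H2 :: "('g2, 'm2) monoid_scheme"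
    and X1 :: "'x1 set" and X2 :: "'x2 set"
    and act1 :: "'g1 \<Rightarrow> 'x1 \<Rightarrow> 'x1" and act2 :: "'g2 \<Rightarrow> 'x2 \<Rightarrow> 'x2"
    and H2' :: "'g2 set" and \<phi> :: "'g2 \<Rightarrow> 'x1 \<Rightarrow> 'x2 \<Rightarrow> 'x1"
    and x10 :: 'x1 and x20 :: 'x2
    and X2' :: "'x2 set" and X :: "('x1 \<times> 'x2) set"
    and \<Gamma>1 :: "'g1 \<Rightarrow> 'x1 \<times> 'x2 \<Rightarrow> 'x1 \<times> 'x2" and \<Gamma>2 :: "'g2 \<Rightarrow> 'x1 \<times> 'x2 \<Rightarrow> 'x1 \<times> 'x2"
    and G1 G2 :: "('x1 \<times> 'x2 \<Rightarrow> 'x1 \<times> 'x2) set"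
    and H2'grp :: "('g2, 'm2) monoid_scheme" and \<psi> :: "'g2 \<Rightarrow> 'x1 \<Rightarrow> 'x1"
  assumes X2'_def: "X2' = {y \<in> X2. \<forall>g \<in> carrier H2. act2 g y = y \<longleftrightarrow> g \<in> H2'}"
    and X_def: "X = X1 \<times> X2'"
    and \<Gamma>1_def: "\<Gamma>1 = (\<lambda>g (z1, z2). (act1 g z1, z2))"
    and \<Gamma>2_def: "\<Gamma>2 = skew_act \<phi> act2"
    and G1_def: "G1 = perm_rep H1 \<Gamma>1 X"
    and G2_def: "G2 = perm_rep H2 \<Gamma>2 X"
    and H2'grp_def: "H2'grp = H2\<lparr>carrier := H2'\<rparr>"
    and \<psi>_def: "\<psi> = (\<lambda>g. \<lambda>y \<in> X1. \<phi> g y x20)"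
    and transitive: "transitive_action H1 X1 act1"
    and abelian: "comm_group H2"
    and act2_action: "group_action H2 X2 act2"
    and subgrp: "subgroup H2' H2"
    and \<phi>_closed: "\<And>g x1 x2. g \<in> carrier H2 \<Longrightarrow> x1 \<in> X1 \<Longrightarrow> x2 \<in> X2' \<Longrightarrow> \<phi> g x1 x2 \<in> X1"
    and \<phi>_one: "\<And>x1 x2. x1 \<in> X1 \<Longrightarrow> x2 \<in> X2' \<Longrightarrow> \<phi> \<one>\<^bsub>H2\<^esub> x1 x2 = x1"
    and \<phi>_mult: "\<And>g h x1 x2. g \<in> carrier H2 \<Longrightarrow> h \<in> carrier H2 \<Longrightarrow> x1 \<in> X1 \<Longrightarrow> x2 \<in> X2' \<Longrightarrow>
           \<phi> (g \<otimes>\<^bsub>H2\<^esub> h) x1 x2 = \<phi> h (\<phi> g x1 x2) (act2 g x2)"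
    and commuting: "\<forall>\<sigma> \<in> G1. \<forall>\<tau> \<in> G2. \<forall>z \<in> X. \<sigma> (\<tau> z) = \<tau> (\<sigma> z)"
    and base_point: "(x10, x20) \<in> X"
begin

sublocale H1: transitive_action H1 X1 act1 by (fact transitive)

lemma x10: "x10 \<in> X1" and x20: "x20 \<in> X2'"
  using base_point by (simp_all add: X_def)

lemma H2'_carrier: "g \<in> H2' \<Longrightarrow> g \<in> carrier H2"
  using subgroup.mem_carrier[OF subgrp] .

lemma x20_stab: "g \<in> carrier H2 \<Longrightarrow> act2 g x20 = x20 \<longleftrightarrow> g \<in> H2'"
  using x20 by (simp add: X2'_def)

text \<open>The exact-stabilizer condition defining X2' is preserved by H2 because H2 is abelian.\<close>
lemma X2'_closed:
  assumes g: "g \<in> carrier H2" and y: "y \<in> X2'"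
  shows "act2 g y \<in> X2'"
proof -
  have "y \<in> X2" using y by (simp add: X2'_def)
  thus ?thesis
    using y g group_action.element_image[OF act2_action]
      group_action.fixes_image_iff[OF act2_action abelian g] by (auto simp: X2'_def)
qed

abbreviation \<Gamma>2_perm :: "'g2 \<Rightarrow> 'x1 \<times> 'x2 \<Rightarrow> 'x1 \<times> 'x2" where
  "\<Gamma>2_perm g \<equiv> restrict (\<Gamma>2 g) X"

sublocale \<Gamma>: group_action H2 X \<Gamma>2_perm
  unfolding \<Gamma>2_def X_def
proof (rule skew_group_action[where Y = X2'])
  show "X2' \<subseteq> X2" by (auto simp: X2'_def)
qed (fact abelian act2_action X2'_closed \<phi>_closed \<phi>_one \<phi>_mult)+

sublocale \<Psi>: group_action H2'grp X1 \<psi>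
  unfolding H2'grp_def \<psi>_def
  by (rule stabilizer_fibre_group_action[OF abelian subgrp, where act = act2])
     (use x20_stab x20 in \<open>auto simp: H2'_carrier \<phi>_closed \<phi>_one \<phi>_mult\<close>)

lemma G2_orbit: "z \<in> X \<Longrightarrow> perm_orbit G2 z = orbit H2 \<Gamma>2_perm z"
  unfolding G2_def by (rule perm_orbit_perm_rep)

lemma fibre_orbit: "y \<in> X1 \<Longrightarrow> fibre_at x20 (orbit H2 \<Gamma>2_perm (y, x20)) = orbit H2'grp \<psi> y"
  unfolding fibre_at_def \<Gamma>2_def X_def H2'grp_def \<psi>_def
  by (rule skew_orbit_fibre) (use x20 x20_stab subgroup.subset[OF subgrp] in auto)

lemma \<Gamma>1_closed: "h \<in> carrier H1 \<Longrightarrow> z \<in> X \<Longrightarrow> \<Gamma>1 h z \<in> X"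
  using H1.element_image by (auto simp: X_def \<Gamma>1_def)

lemma commute:
  assumes h: "h \<in> carrier H1" and g: "g \<in> carrier H2" and z: "z \<in> X"
  shows "\<Gamma>1 h (\<Gamma>2_perm g z) = \<Gamma>2_perm g (\<Gamma>1 h z)"
proof -
  have "\<Gamma>2 g z \<in> X" using \<Gamma>.element_image[OF g z] z by simp
  hence "\<Gamma>1 h (\<Gamma>2 g z) = \<Gamma>2 g (\<Gamma>1 h z)"
    using perm_rep_commute[OF commuting[unfolded G1_def G2_def] h g z] \<Gamma>1_closed[OF h z] by blast
  thus ?thesis using z \<Gamma>1_closed[OF h z] by simp
qed

lemma \<psi>_commute:
  assumes h: "h \<in> carrier H1" and g: "g \<in> H2'" and y: "y \<in> X1"
  shows "act1 h (\<psi> g y) = \<psi> g (act1 h y)"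
proof -
  have "(y, x20) \<in> X" "(act1 h y, x20) \<in> X" "act1 h y \<in> X1"
    using y x20 h H1.element_image by (auto simp: X_def)
  thus ?thesis
    using commute[OF h H2'_carrier[OF g], of "(y, x20)"] y
    by (simp add: \<psi>_def \<Gamma>1_def \<Gamma>2_def skew_act_def)
qed

text \<open>By transitivity of H1, the G1-orbit of the base point is the whole fibre X1 \<times> {x20}.\<close>
lemma G1_base_orbit: "{\<sigma> (x10, x20) | \<sigma>. \<sigma> \<in> G1} = (\<lambda>y. (y, x20)) ` X1"
proof -
  have "{\<sigma> (x10, x20) | \<sigma>. \<sigma> \<in> G1} = (\<lambda>h. restrict (\<Gamma>1 h) X (x10, x20)) ` carrier H1"
    unfolding G1_def perm_rep_def by blast
  also have "\<dots> = (\<lambda>h. (act1 h x10, x20)) ` carrier H1"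
    using base_point by (simp add: \<Gamma>1_def)
  also have "\<dots> = (\<lambda>y. (y, x20)) ` X1"
    using H1.element_image H1.unique_orbit[OF x10] x10 by blast
  finally show ?thesis .
qed


lemma base_orbits:
  "{perm_orbit G2 (\<sigma> (x10, x20)) | \<sigma>. \<sigma> \<in> G1} = (\<lambda>y. orbit H2 \<Gamma>2_perm (y, x20)) ` X1"
proof -
  have "{perm_orbit G2 (\<sigma> (x10, x20)) | \<sigma>. \<sigma> \<in> G1} = perm_orbit G2 ` {\<sigma> (x10, x20) | \<sigma>. \<sigma> \<in> G1}"
    by blast
  also have "\<dots> = perm_orbit G2 ` (\<lambda>y. (y, x20)) ` X1"
    by (simp only: G1_base_orbit)
  also have "\<dots> = (\<lambda>y. orbit H2 \<Gamma>2_perm (y, x20)) ` X1"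
    using G2_orbit x20 by (auto simp: X_def image_image)
  finally show ?thesis .
qed

lemma fibre_bij:
  "bij_betw (fibre_at x20) {perm_orbit G2 (\<sigma> (x10, x20)) | \<sigma>. \<sigma> \<in> G1} (orbits H2'grp X1 \<psi>)"
  unfolding base_orbits
proof (rule bij_betw_imageI)
  show "inj_on (fibre_at x20) ((\<lambda>y. orbit H2 \<Gamma>2_perm (y, x20)) ` X1)"
  proof (rule inj_onI)
    fix Q Q' assume "Q \<in> (\<lambda>y. orbit H2 \<Gamma>2_perm (y, x20)) ` X1"
      and "Q' \<in> (\<lambda>y. orbit H2 \<Gamma>2_perm (y, x20)) ` X1" and eq: "fibre_at x20 Q = fibre_at x20 Q'"
    then obtain y y' where y: "y \<in> X1" "Q = orbit H2 \<Gamma>2_perm (y, x20)"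
      and y': "y' \<in> X1" "Q' = orbit H2 \<Gamma>2_perm (y', x20)" by blast
    have "y \<in> fibre_at x20 Q'"
      using eq \<Psi>.orbit_refl[OF y(1)] fibre_orbit[OF y(1)] y(2) by simp
    hence "(y, x20) \<in> Q'" by (simp add: fibre_at_def)
    thus "Q = Q'" using \<Gamma>.orbit_eq_of_mem y y' x20 by (simp add: X_def)
  qed
  show "fibre_at x20 ` (\<lambda>y. orbit H2 \<Gamma>2_perm (y, x20)) ` X1 = orbits H2'grp X1 \<psi>"
    using fibre_orbit by (auto simp: orbits_def image_image)
qed

lemma fibre_equivariant:
  assumes h: "h \<in> carrier H1" and Q: "Q \<in> {perm_orbit G2 (\<sigma> (x10, x20)) | \<sigma>. \<sigma> \<in> G1}"
  shows "fibre_at x20 (orbit_act (perm_orbit G2) \<Gamma>1 h Q)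
         = orbit_act (orbit H2'grp \<psi>) act1 h (fibre_at x20 Q)"
proof -
  obtain y where y: "y \<in> X1" and Q_eq: "Q = orbit H2 \<Gamma>2_perm (y, x20)"
    using Q unfolding base_orbits by blast
  have hy: "act1 h y \<in> X1" using H1.element_image h y by blast
  have "orbit_act (perm_orbit G2) \<Gamma>1 h Q = orbit H2 \<Gamma>2_perm (\<Gamma>1 h (y, x20))"
    unfolding Q_eq using y x20 \<Gamma>1_closed[OF h] commute[OF h] G2_orbit
    by (intro \<Gamma>.orbit_act_orbit) (auto simp: X_def)
  hence "fibre_at x20 (orbit_act (perm_orbit G2) \<Gamma>1 h Q) = orbit H2'grp \<psi> (act1 h y)"
    using fibre_orbit[OF hy] by (simp add: \<Gamma>1_def)
  also have "\<dots> = orbit_act (orbit H2'grp \<psi>) act1 h (orbit H2'grp \<psi> y)"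
    using y H1.element_image[OF h] \<psi>_commute[OF h]
    by (intro \<Psi>.orbit_act_orbit[symmetric]) (auto simp: H2'grp_def)
  finally show ?thesis using fibre_orbit[OF y] Q_eq by simp
qed

end

theorem mainTheorem3:
  fixes H1 :: "('g1, 'm1) monoid_scheme" and H2 :: "('g2, 'm2) monoid_scheme"
    and X1 :: "'x1 set" and X2 :: "'x2 set"
    and act1 :: "'g1 \<Rightarrow> 'x1 \<Rightarrow> 'x1" and act2 :: "'g2 \<Rightarrow> 'x2 \<Rightarrow> 'x2"
    and H2' :: "'g2 set"
    and \<phi> :: "'g2 \<Rightarrow> 'x1 \<Rightarrow> 'x2 \<Rightarrow> 'x1"
    and x10 :: 'x1 and x20 :: 'x2
  defines "X2' \<equiv> {y \<in> X2. \<forall>g \<in> carrier H2. act2 g y = y \<longleftrightarrow> g \<in> H2'}"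
  defines "X \<equiv> X1 \<times> X2'"
  defines "\<Gamma>1 \<equiv> (\<lambda>g (z1, z2). (act1 g z1, z2))"
  defines "\<Gamma>2 \<equiv> (\<lambda>g (z1, z2). (\<phi> g z1 z2, act2 g z2))"
  defines "G1 \<equiv> perm_rep H1 \<Gamma>1 X"
  defines "G2 \<equiv> perm_rep H2 \<Gamma>2 X"
  defines "H2'grp \<equiv> H2\<lparr>carrier := H2'\<rparr>"
  defines "\<psi> \<equiv> (\<lambda>g. \<lambda>y \<in> X1. \<phi> g y x20)"
  assumes "transitive_action H1 X1 act1"
    and "comm_group H2"
    and "group_action H2 X2 act2"
    and "subgroup H2' H2"
    and "\<And>g x1 x2. g \<in> carrier H2 \<Longrightarrow> x1 \<in> X1 \<Longrightarrow> x2 \<in> X2' \<Longrightarrow> \<phi> g x1 x2 \<in> X1"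
    and "\<And>x1 x2. x1 \<in> X1 \<Longrightarrow> x2 \<in> X2' \<Longrightarrow> \<phi> \<one>\<^bsub>H2\<^esub> x1 x2 = x1"
    and "\<And>g h x1 x2. g \<in> carrier H2 \<Longrightarrow> h \<in> carrier H2 \<Longrightarrow> x1 \<in> X1 \<Longrightarrow> x2 \<in> X2' \<Longrightarrow>
           \<phi> (g \<otimes>\<^bsub>H2\<^esub> h) x1 x2 = \<phi> h (\<phi> g x1 x2) (act2 g x2)"
    and "\<forall>\<sigma> \<in> G1. \<forall>\<tau> \<in> G2. \<forall>z \<in> X. \<sigma> (\<tau> z) = \<tau> (\<sigma> z)"
    and "(x10, x20) \<in> X"
  shows "\<exists>F. bij_betw F {perm_orbit G2 (\<sigma> (x10, x20)) | \<sigma>. \<sigma> \<in> G1} (orbits H2'grp X1 \<psi>)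
           \<and> (\<forall>h \<in> carrier H1. \<forall>Q \<in> {perm_orbit G2 (\<sigma> (x10, x20)) | \<sigma>. \<sigma> \<in> G1}.
                F (orbit_act (perm_orbit G2) \<Gamma>1 h Q) = orbit_act (orbit H2'grp \<psi>) act1 h (F Q))"
proof -
  interpret twisted_product H1 H2 X1 X2 act1 act2 H2' \<phi> x10 x20 X2' X \<Gamma>1 \<Gamma>2 G1 G2 H2'grp \<psi>
    by (rule twisted_product.intro; (fact assms(9-17))?; simp add: assms(1-8) skew_act_def[abs_def])
  show ?thesis
    using fibre_bij fibre_equivariant by (intro exI[of _ "fibre_at x20"] conjI ballI)
qed

end
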